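(* Let $\mathcal{X},\mathcal{Y}$ be finite, $P_X$ a distribution, $P_{Y|X}$ a channel with output $P_Y$, and let $M$ be a positive integer and $\mathscr{C}_M^n=\{X_1^n,\dots,X_M^n\}$ a codebook of $M$ independent codewords drawn from $P_{X^n}$. Fix $y^n\in\mathcal{T}^n_{Q_{\bar Y}}$ with $P_{Y^n}(y^n)>0$ and a conditional type $Q_{\bar X|\bar Y}\in\mathcal{P}_n(\mathcal{X}|Q_{\bar Y})$, let $Q_{\bar X\bar Y}=Q_{\bar X|\bar Y}Q_{\bar Y}$, $(\bar X,\bar Y)\sim Q_{\bar X\bar Y}$ and $x^n_{Q_{\bar X|\bar Y}}\in\mathcal{T}^n_{Q_{\bar X|\bar Y}}(y^n)$. Then \[ P_{Y^n}(y^n)\,\mathbb{E}\big[|Z_{Q_{\bar X\bar Y}}-\mathbb{E}[Z_{Q_{\bar X\bar Y}}]|\big]\le P_{Y^n|X^n}(y^n|x^n_{Q_{\bar X|\bar Y}})\,\mathfrak{Y}(M,Q_{\bar X\bar Y})=\exp\big(-n\,\mathbb{E}[\imath_{P_{Y|X}}(\bar Y|\bar X)]\big)\,\mathfrak{Y}(M,Q_{\bar X\bar Y}). \]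
   Context: $P_{X^n},P_{Y^n}$ are i.i.d. extensions of $P_X,P_Y$; $P_{Y^n|X^n}(y^n|x^n)=\prod_iP_{Y|X}(y_i|x_i)$. For an $n$-type $Q_{\bar Y}$, $\mathcal{T}^n_{Q_{\bar Y}}$ is its type class. A conditional type of $x^n$ given $y^n$ is $Q_{\bar X|\bar Y}$ with $Q_{\bar X|\bar Y}(a|b)Q_{\bar Y}(b)$ equal to the joint empirical distribution of $(x^n,y^n)$; $\mathcal{P}_n(\mathcal{X}|Q_{\bar Y})$ is the set of such conditional types and $\mathcal{T}^n_{Q_{\bar X|\bar Y}}(y^n)$ the set of $x^n$ with that conditional type given $y^n$. Define $N_{Q_{\bar X|\bar Y}}(y^n)=\sum_{j=1}^M1\{X_j^n\in\mathcal{T}^n_{Q_{\bar X|\bar Y}}(y^n)\}$, $p_{Q_{\bar X|\bar Y}}(y^n)=\mathbb{P}[X^n\in\mathcal{T}^n_{Q_{\bar X|\bar Y}}(y^n)]$ for $X^n\sim P_{X^n}$, $l_{Q_{\bar X|\bar Y}}(y^n)=P_{Y^n|X^n}(y^n|x^n_{Q_{\bar X|\bar Y}})/P_{Y^n}(y^n)$, $Z_{Q_{\bar X\bar Y}}=\frac1MN_{Q_{\bar X|\bar Y}}(y^n)\,l_{Q_{\bar X|\bar Y}}(y^n)$, and $\mathfrak{Y}(M,Q_{\bar X\bar Y})=\min\{2p_{Q_{\bar X|\bar Y}}(y^n),\,M^{-1/2}p_{Q_{\bar X|\bar Y}}^{1/2}(y^n)\}$. $\imath_{P_{Y|X}}(y|x)=\log\frac1{P_{Y|X}(y|x)}$;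 logs and exps use a common base. *)

theory Defs
  imports "HOL-Probability.Probability"
begin

text \<open>Length-n sequences are functions nat => 'a; only the positions i < n matter.
  The i.i.d. extension of a pmf is a product pmf over the positions {..<n}.\<close>

definition iid_pmf :: "nat \<Rightarrow> 'a pmf \<Rightarrow> (nat \<Rightarrow> 'a) pmf" where
  "iid_pmf n P = Pi_pmf {..<n} undefined (\<lambda>_. P)"

definition out_pmf :: "'x pmf \<Rightarrow> ('x \<Rightarrow> 'y pmf) \<Rightarrow> 'y pmf" where
  "out_pmf PX W = bind_pmf PX W"

definition seq_prob :: "nat \<Rightarrow> 'y pmf \<Rightarrow> (nat \<Rightarrow> 'y) \<Rightarrow> real" where
  "seq_prob n P y = (\<Prod>i<n. pmf P (y i))"

definition chan_prob :: "nat \<Rightarrow> ('x \<Rightarrow> 'y pmf) \<Rightarrow> (nat \<Rightarrow> 'x) \<Rightarrow> (nat \<Rightarrow> 'y) \<Rightarrow> real" where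
  "chan_prob n W x y = (\<Prod>i<n. pmf (W (x i)) (y i))"

definition n_type :: "nat \<Rightarrow> ('a::finite \<Rightarrow> real) \<Rightarrow> bool" where
  "n_type n Q \<longleftrightarrow> (\<forall>b. Q b \<ge> 0) \<and> (\<Sum>b\<in>UNIV. Q b) = 1 \<and> (\<forall>b. \<exists>k::nat. Q b = real k / real n)"

definition seq_type_class :: "nat \<Rightarrow> ('a \<Rightarrow> real) \<Rightarrow> (nat \<Rightarrow> 'a) set" where
  "seq_type_class n Q = {y. \<forall>b. real (card {i. i < n \<and> y i = b}) = real n * Q b}"

text \<open>Conditional type class T^n_{Q_{X|Y}}(y^n): x^n whose joint empirical distribution with y^n
  equals Q_{X|Y}(a|b) Q_Y(b).  A conditional type is represented as Qc a b = Q_{X|Y}(a|b).\<close>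
definition cond_type_class ::
  "nat \<Rightarrow> ('x \<Rightarrow> 'y \<Rightarrow> real) \<Rightarrow> ('y \<Rightarrow> real) \<Rightarrow> (nat \<Rightarrow> 'y) \<Rightarrow> (nat \<Rightarrow> 'x) set" where
  "cond_type_class n Qc QY y =
     {x. \<forall>a b. real (card {i. i < n \<and> x i = a \<and> y i = b}) = real n * (Qc a b * QY b)}"

definition cond_types :: "nat \<Rightarrow> ('y::finite \<Rightarrow> real) \<Rightarrow> ('x::finite \<Rightarrow> 'y \<Rightarrow> real) set" where
  "cond_types n QY =
     {Qc. (\<forall>a b. Qc a b \<ge> 0) \<and> (\<forall>b. (\<Sum>a\<in>UNIV. Qc a b) = 1) \<and>
          (\<exists>x y. y \<in> seq_type_class n QY \<and> x \<in> cond_type_class n Qc QY y)}"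

definition info_dens :: "('x \<Rightarrow> 'y pmf) \<Rightarrow> 'x \<Rightarrow> 'y \<Rightarrow> ereal" where
  "info_dens W a b = (if pmf (W a) b = 0 then \<infinity> else ereal (- ln (pmf (W a) b)))"

text \<open>E[i(Ybar|Xbar)] for (Xbar,Ybar) ~ Q_{XY} (with 0 * infinity = 0).\<close>
definition exp_info_dens :: "('x::finite \<Rightarrow> 'y::finite \<Rightarrow> real) \<Rightarrow> ('x \<Rightarrow> 'y pmf) \<Rightarrow> ereal" where
  "exp_info_dens QXY W = (\<Sum>(a,b)\<in>UNIV. ereal (QXY a b) * info_dens W a b)"

text \<open>exp on the extended reals, with exp(-infinity) = 0 (the value at +infinity never occurs).\<close>
definition exp_ext :: "ereal \<Rightarrow> real" where
  "exp_ext e = (case e of ereal r \<Rightarrow> exp r | PInfty \<Rightarrow> 0 | MInfty \<Rightarrow> 0)"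

definition codebook_pmf :: "nat \<Rightarrow> nat \<Rightarrow> 'x pmf \<Rightarrow> (nat \<Rightarrow> (nat \<Rightarrow> 'x)) pmf" where
  "codebook_pmf M n PX = Pi_pmf {..<M} undefined (\<lambda>_. iid_pmf n PX)"

definition N_count :: "nat \<Rightarrow> (nat \<Rightarrow> 'x) set \<Rightarrow> (nat \<Rightarrow> (nat \<Rightarrow> 'x)) \<Rightarrow> nat" where
  "N_count M T C = card {j. j < M \<and> C j \<in> T}"

definition frakY :: "nat \<Rightarrow> real \<Rightarrow> real" where
  "frakY M p = min (2 * p) (sqrt p / sqrt (real M))"

end

theory Submission
  imports Defs
begin

text \<open>N_count is a sum of M independent indicators of the event T, so it is binomial
  with parameter p = P[X^n \<in> T], and Z is l/M times it.  The mean absolute deviation of a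
  binomial frequency k/M from p is at most 2p by the triangle inequality, and at most the
  standard deviation sqrt(p(1-p)/M) \<le> sqrt(p/M), since (E|D|)^2 \<le> E D^2; multiplying by
  P_{Y^n}(y^n) l = P_{Y^n|X^n}(y^n|x^n) gives the bound.  The identity for the channel
  probability holds because it depends on x^n only through its joint type with y^n: it is the
  product of P_{Y|X}(b|a) raised to the joint counts n Q(a,b).\<close>

lemma (in prob_space) expectation_abs_le_sqrt_second_moment:
  fixes X :: "'a \<Rightarrow> real"
  assumes "integrable M X" and "integrable M (\<lambda>x. (X x)\<^sup>2)"
  shows "expectation (\<lambda>x. \<bar>X x\<bar>) \<le> sqrt (expectation (\<lambda>x. (X x)\<^sup>2))"
proof (rule real_le_rsqrt)
  have "0 \<le> variance (\<lambda>x. \<bar>X x\<bar>)"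
    by (rule variance_positive)
  also have "\<dots> = expectation (\<lambda>x. (X x)\<^sup>2) - (expectation (\<lambda>x. \<bar>X x\<bar>))\<^sup>2"
    using variance_eq[of "\<lambda>x. \<bar>X x\<bar>"] assms by simp
  finally show "(expectation (\<lambda>x. \<bar>X x\<bar>))\<^sup>2 \<le> expectation (\<lambda>x. (X x)\<^sup>2)"
    by simp
qed

lemma expectation_binomial_pmf_Suc:
  fixes f :: "nat \<Rightarrow> real"
  assumes p: "p \<in> {0..1}"
  shows "measure_pmf.expectation (binomial_pmf (Suc n) p) f =
     p * measure_pmf.expectation (binomial_pmf n p) (\<lambda>k. f (Suc k)) +
     (1 - p) * measure_pmf.expectation (binomial_pmf n p) f"
proof -
  have "binomial_pmf (Suc n) p = bernoulli_pmf p \<bind>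
      (\<lambda>b. map_pmf (\<lambda>k. (if b then 1 else 0) + k) (binomial_pmf n p))"
    unfolding binomial_pmf_Suc[OF p] map_pmf_def by simp
  then have "measure_pmf.expectation (binomial_pmf (Suc n) p) f =
     (\<Sum>b\<in>UNIV. pmf (bernoulli_pmf p) b *\<^sub>R measure_pmf.expectation
        (map_pmf (\<lambda>k. (if b then 1 else 0) + k) (binomial_pmf n p)) f)"
    by (simp only:) (rule pmf_expectation_bind; use p finite_set_pmf_binomial_pmf[OF p] in auto)
  then show ?thesis
    using p by (simp add: UNIV_bool)
qed

lemma expectation_binomial_pmf:
  assumes p: "p \<in> {0..1}"
  shows "measure_pmf.expectation (binomial_pmf n p) real = real n * p"
proof (induction n)
  case 0
  then show ?case using p by (simp add: binomial_pmf_0)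
next
  case (Suc n)
  have "measure_pmf.expectation (binomial_pmf n p) (\<lambda>k. real k + 1)
      = measure_pmf.expectation (binomial_pmf n p) real + 1"
    using p by (simp add: Bochner_Integration.integral_add)
  then show ?case
    using Suc expectation_binomial_pmf_Suc[OF p, of n real] by (simp add: algebra_simps)
qed

lemma second_moment_binomial_pmf:
  assumes p: "p \<in> {0..1}"
  shows "measure_pmf.expectation (binomial_pmf n p) (\<lambda>k. (real k)\<^sup>2)
           = real n * p * (1 - p) + (real n * p)\<^sup>2"
proof (induction n)
  case 0
  then show ?case using p by (simp add: binomial_pmf_0)
next
  case (Suc n)
  have "measure_pmf.expectation (binomial_pmf n p) (\<lambda>k. (real (Suc k))\<^sup>2)
      = measure_pmf.expectation (binomial_pmf n p) (\<lambda>k. (real k)\<^sup>2 + 2 * real k + 1)"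
    by (simp add: power2_eq_square algebra_simps)
  also have "\<dots> = measure_pmf.expectation (binomial_pmf n p) (\<lambda>k. (real k)\<^sup>2)
       + 2 * measure_pmf.expectation (binomial_pmf n p) real + 1"
    using p by (simp add: Bochner_Integration.integral_add)
  finally show ?case
    using Suc expectation_binomial_pmf_Suc[OF p, of n "\<lambda>k. (real k)\<^sup>2"] expectation_binomial_pmf[OF p, of n]
    by (simp add: algebra_simps power2_eq_square)
qed

lemma mean_square_deviation_binomial_frequency:
  assumes p: "p \<in> {0..1}" and M: "M > 0"
  shows "measure_pmf.expectation (binomial_pmf M p) (\<lambda>k. (real k / real M - p)\<^sup>2) = p * (1 - p) / real M"
proof -
  have "measure_pmf.expectation (binomial_pmf M p) (\<lambda>k. (real k / real M - p)\<^sup>2)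
     = measure_pmf.expectation (binomial_pmf M p)
         (\<lambda>k. (real k)\<^sup>2 / (real M)\<^sup>2 - (2 * p / real M) * real k + p\<^sup>2)"
    using M by (simp add: power2_eq_square field_simps)
  also have "\<dots> = measure_pmf.expectation (binomial_pmf M p) (\<lambda>k. (real k)\<^sup>2) / (real M)\<^sup>2
      - (2 * p / real M) * measure_pmf.expectation (binomial_pmf M p) real + p\<^sup>2"
    using p by (simp add: Bochner_Integration.integral_add Bochner_Integration.integral_diff)
  also have "\<dots> = p * (1 - p) / real M"
    using M unfolding second_moment_binomial_pmf[OF p] expectation_binomial_pmf[OF p]
    by (simp add: power2_eq_square field_simps)
  finally show ?thesis .
qed

lemma mean_abs_deviation_binomial_frequency:
  assumes p: "p \<in> {0..1}" and M: "M > 0"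
  shows "measure_pmf.expectation (binomial_pmf M p) (\<lambda>k. \<bar>real k / real M - p\<bar>)
           \<le> min (2 * p) (sqrt p / sqrt (real M))"
proof -
  let ?E = "measure_pmf.expectation (binomial_pmf M p)"
  have "?E (\<lambda>k. \<bar>real k / real M - p\<bar>) \<le> ?E (\<lambda>k. real k / real M + p)"
    using p by (intro integral_mono) (auto simp: abs_le_iff)
  also have "\<dots> = 2 * p"
    using p M by (simp add: Bochner_Integration.integral_add expectation_binomial_pmf)
  finally have triangle: "?E (\<lambda>k. \<bar>real k / real M - p\<bar>) \<le> 2 * p" .
  have "?E (\<lambda>k. \<bar>real k / real M - p\<bar>) \<le> sqrt (?E (\<lambda>k. (real k / real M - p)\<^sup>2))"
    using p by (intro measure_pmf.expectation_abs_le_sqrt_second_moment) auto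
  also have "\<dots> = sqrt (p * (1 - p) / real M)"
    using p M by (simp add: mean_square_deviation_binomial_frequency)
  also have "\<dots> \<le> sqrt p / sqrt (real M)"
    using p by (simp add: real_sqrt_divide divide_right_mono mult_left_le)
  finally show ?thesis
    using triangle by simp
qed

lemma info_dens_nonneg: "0 \<le> info_dens W a b"
  using pmf_le_1[of "W a" b] pmf_nonneg[of "W a" b] by (simp add: info_dens_def)

lemma exp_ext_zero [simp]: "exp_ext 0 = 1"
  by (simp add: exp_ext_def zero_ereal_def)

lemma exp_ext_neg_add:
  assumes "0 \<le> a" and "0 \<le> b"
  shows "exp_ext (- (a + b)) = exp_ext (- a) * exp_ext (- b)"
  using assms by (cases a; cases b) (simp_all add: exp_ext_def flip: exp_add)

lemma exp_ext_neg_sum: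
  assumes "\<And>i. i \<in> A \<Longrightarrow> 0 \<le> f i"
  shows "exp_ext (- (\<Sum>i\<in>A. f i)) = (\<Prod>i\<in>A. exp_ext (- f i))"
  using assms
  by (induction A rule: infinite_finite_induct) (simp_all add: exp_ext_neg_add sum_nonneg)

lemma power_pmf_eq_exp_ext_info_dens:
  assumes "n > 0" and "real k = real n * q"
  shows "pmf (W a) b ^ k = exp_ext (- (ereal (real n) * (ereal q * info_dens W a b)))"
proof (cases "pmf (W a) b = 0")
  case False
  then have "pmf (W a) b > 0" by (simp add: order_less_le)
  then have "pmf (W a) b ^ k = exp (real k * ln (pmf (W a) b))"
    by (simp add: exp_of_nat_mult)
  then show ?thesis
    using False assms by (simp add: info_dens_def exp_ext_def)
next
  case zero: True
  show ?thesis
  proof (cases "k = 0")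
    case True
    then have "q = 0" using assms by simp
    then show ?thesis using \<open>k = 0\<close> by (simp add: zero_ereal_def[symmetric])
  next
    case False
    then have "real n * q > 0" using assms(2) by simp
    then have "q > 0" using \<open>n > 0\<close> by (simp add: zero_less_mult_iff)
    then show ?thesis using zero False assms by (simp add: info_dens_def exp_ext_def)
  qed
qed

lemma N_count_codebook_pmf_binomial:
  "map_pmf (N_count M T) (codebook_pmf M n PX) = binomial_pmf M (measure_pmf.prob (iid_pmf n PX) T)"
proof -
  define q where "q = measure_pmf.prob (iid_pmf n PX) T"
  have q: "q \<in> {0..1}" by (simp add: q_def)
  have indicator_bernoulli: "map_pmf (\<lambda>x. x \<in> T) (iid_pmf n PX) = bernoulli_pmf q"
  proof (rule pmf_eqI)
    fix b :: bool
    have "measure_pmf.prob (iid_pmf n PX) {x. x \<notin> T} = 1 - q"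
      unfolding q_def using measure_pmf.prob_compl[of T "iid_pmf n PX"]
      by (simp add: Compl_eq_Diff_UNIV[symmetric] Collect_neg_eq)
    then show "pmf (map_pmf (\<lambda>x. x \<in> T) (iid_pmf n PX)) b = pmf (bernoulli_pmf q) b"
      using q by (cases b) (simp_all add: pmf_map vimage_def q_def)
  qed
  have "binomial_pmf M q = map_pmf (\<lambda>f. card {j\<in>{..<M}. f j})
          (Pi_pmf {..<M} (undefined \<in> T) (\<lambda>_. map_pmf (\<lambda>x. x \<in> T) (iid_pmf n PX)))"
    unfolding indicator_bernoulli using q by (intro binomial_pmf_altdef') auto
  also have "Pi_pmf {..<M} (undefined \<in> T) (\<lambda>_. map_pmf (\<lambda>x. x \<in> T) (iid_pmf n PX))
      = map_pmf (\<lambda>C. (\<lambda>x. x \<in> T) \<circ> C) (codebook_pmf M n PX)"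
    unfolding codebook_pmf_def by (rule Pi_pmf_map) auto
  finally show ?thesis
    by (simp add: map_pmf_comp N_count_def[abs_def] q_def)
qed

lemma mean_abs_deviation_scaled_N_count:
  fixes T :: "(nat \<Rightarrow> 'x) set" and PX :: "'x pmf"
  assumes "M > 0" and "l \<ge> 0"
  defines "Z \<equiv> \<lambda>C. real (N_count M T C) * l / real M"
  shows "measure_pmf.expectation (codebook_pmf M n PX)
           (\<lambda>C. \<bar>Z C - measure_pmf.expectation (codebook_pmf M n PX) Z\<bar>)
         \<le> l * frakY M (measure_pmf.prob (iid_pmf n PX) T)"
proof -
  define p where "p = measure_pmf.prob (iid_pmf n PX) T"
  have p: "p \<in> {0..1}" by (simp add: p_def)
  have transfer: "measure_pmf.expectation (codebook_pmf M n PX) (\<lambda>C. h (N_count M T C))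
      = measure_pmf.expectation (binomial_pmf M p) h" for h :: "nat \<Rightarrow> real"
    by (simp add: p_def flip: N_count_codebook_pmf_binomial)
  have "measure_pmf.expectation (codebook_pmf M n PX) Z
      = measure_pmf.expectation (binomial_pmf M p) (\<lambda>k. l / real M * real k)"
    unfolding Z_def by (simp add: transfer[symmetric] field_simps)
  also have "\<dots> = l * p"
    using \<open>M > 0\<close> by (simp add: expectation_binomial_pmf[OF p])
  finally have mean: "measure_pmf.expectation (codebook_pmf M n PX) Z = l * p" .
  have "\<bar>Z C - l * p\<bar> = l * \<bar>real (N_count M T C) / real M - p\<bar>" for C
  proof -
    have "Z C - l * p = l * (real (N_count M T C) / real M - p)"
      by (simp add: Z_def algebra_simps)
    then show ?thesis
      using \<open>l \<ge> 0\<close> by (simp add: abs_mult)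
  qed
  then have "measure_pmf.expectation (codebook_pmf M n PX) (\<lambda>C. \<bar>Z C - l * p\<bar>)
      = l * measure_pmf.expectation (binomial_pmf M p) (\<lambda>k. \<bar>real k / real M - p\<bar>)"
    by (simp add: transfer[of "\<lambda>k. \<bar>real k / real M - p\<bar>"])
  also have "\<dots> \<le> l * frakY M p"
    unfolding frakY_def
    using mean_abs_deviation_binomial_frequency[OF p \<open>M > 0\<close>] \<open>l \<ge> 0\<close> by (rule mult_left_mono)
  finally show ?thesis
    by (simp add: mean p_def)
qed

lemma chan_prob_eq_prod_joint_counts:
  fixes W :: "'x::finite \<Rightarrow> 'y::finite pmf"
  shows "chan_prob n W x y =
           (\<Prod>(a, b)\<in>UNIV. pmf (W a) b ^ card {i. i < n \<and> x i = a \<and> y i = b})"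
proof -
  have "chan_prob n W x y = (\<Prod>v\<in>UNIV. \<Prod>i\<in>{i. i \<in> {..<n} \<and> (x i, y i) = v}. pmf (W (x i)) (y i))"
    unfolding chan_prob_def by (rule prod.group[symmetric]) auto
  also have "\<dots> = (\<Prod>(a, b)\<in>UNIV. \<Prod>i\<in>{i. i < n \<and> x i = a \<and> y i = b}. pmf (W a) b)"
    by (intro prod.cong) auto
  finally show ?thesis
    by (simp add: case_prod_beta)
qed

lemma chan_prob_eq_exp_ext_info_dens:
  fixes W :: "'x::finite \<Rightarrow> 'y::finite pmf"
  assumes "n > 0"
    and counts: "\<And>a b. real (card {i. i < n \<and> x i = a \<and> y i = b}) = real n * QXY a b"
  shows "chan_prob n W x y = exp_ext (- (ereal (real n) * exp_info_dens QXY W))"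
proof -
  have QXY_nonneg: "0 \<le> QXY a b" for a b
    using counts[of a b] \<open>n > 0\<close> by (metis of_nat_0_le_iff of_nat_0_less_iff zero_le_mult_iff linorder_not_le)
  have "chan_prob n W x y = (\<Prod>(a, b)\<in>UNIV. exp_ext (- (ereal (real n) * (ereal (QXY a b) * info_dens W a b))))"
    unfolding chan_prob_eq_prod_joint_counts
    by (intro prod.cong refl) (auto intro: power_pmf_eq_exp_ext_info_dens[OF \<open>n > 0\<close> counts])
  also have "\<dots> = exp_ext (- (\<Sum>(a, b)\<in>UNIV. ereal (real n) * (ereal (QXY a b) * info_dens W a b)))"
    by (subst exp_ext_neg_sum) (simp_all add: case_prod_beta QXY_nonneg info_dens_nonneg)
  also have "\<dots> = exp_ext (- (ereal (real n) * exp_info_dens QXY W))"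
    unfolding exp_info_dens_def
    by (subst sum_ereal_right_distrib) (simp_all add: case_prod_beta QXY_nonneg info_dens_nonneg)
  finally show ?thesis .
qed

lemma n_type_pos:
  assumes "n_type n Q"
  shows "n > 0"
proof (rule ccontr)
  assume "\<not> n > 0"
  then have "Q = (\<lambda>_. 0)"
    using assms by (auto simp: n_type_def)
  then show False
    using assms by (simp add: n_type_def)
qed

theorem lemma3:
  fixes PX :: "'x::finite pmf" and W :: "'x \<Rightarrow> 'y::finite pmf"
    and M n :: nat and QY :: "'y \<Rightarrow> real" and Qc :: "'x \<Rightarrow> 'y \<Rightarrow> real"
    and y :: "nat \<Rightarrow> 'y" and xQ :: "nat \<Rightarrow> 'x"
  assumes "M > 0"
    and "n_type n QY"
    and "y \<in> seq_type_class n QY"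
    and "seq_prob n (out_pmf PX W) y > 0"
    and "Qc \<in> cond_types n QY"
    and "xQ \<in> cond_type_class n Qc QY y"
  shows
   "let T = cond_type_class n Qc QY y;
        p = measure_pmf.prob (iid_pmf n PX) T;
        l = chan_prob n W xQ y / seq_prob n (out_pmf PX W) y;
        Z = (\<lambda>C. real (N_count M T C) * l / real M);
        EZ = measure_pmf.expectation (codebook_pmf M n PX) Z;
        QXY = (\<lambda>a b. Qc a b * QY b)
    in seq_prob n (out_pmf PX W) y *
         measure_pmf.expectation (codebook_pmf M n PX) (\<lambda>C. \<bar>Z C - EZ\<bar>)
         \<le> chan_prob n W xQ y * frakY M p
     \<and> chan_prob n W xQ y * frakY M p
         = exp_ext (- (ereal (real n) * exp_info_dens QXY W)) * frakY M p"
proof -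
  define T where "T = cond_type_class n Qc QY y"
  define s where "s = seq_prob n (out_pmf PX W) y"
  define c where "c = chan_prob n W xQ y"
  define Z where "Z C = real (N_count M T C) * (c / s) / real M" for C
  have "s > 0" using assms(4) by (simp add: s_def)
  have "c \<ge> 0" unfolding c_def chan_prob_def by (intro prod_nonneg) auto
  have "s * measure_pmf.expectation (codebook_pmf M n PX)
              (\<lambda>C. \<bar>Z C - measure_pmf.expectation (codebook_pmf M n PX) Z\<bar>)
        \<le> s * (c / s * frakY M (measure_pmf.prob (iid_pmf n PX) T))"
    unfolding Z_def using \<open>M > 0\<close> \<open>s > 0\<close> \<open>c \<ge> 0\<close>
    by (intro mult_left_mono mean_abs_deviation_scaled_N_count) auto
  moreover have "c = exp_ext (- (ereal (real n) * exp_info_dens (\<lambda>a b. Qc a b * QY b) W))"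
    unfolding c_def using n_type_pos[OF assms(2)] assms(6)
    by (intro chan_prob_eq_exp_ext_info_dens) (auto simp: cond_type_class_def)
  ultimately show ?thesis
    using \<open>s > 0\<close> by (simp add: Let_def T_def s_def c_def Z_def[abs_def])
qed

end
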